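(* For every $n\ge0$, $$R_{2n}(t,c)=\frac{q_{2n}(\lambda_0,c)}{(4\lambda_0^3-c)^{5n+2}},\qquad R_{2n+1}(t,c)=\frac{\lambda_0^{1/2}\,q_{2n+1}(\lambda_0,c)}{(4\lambda_0^3-c)^{5n+9/2}},$$ for some polynomials $q_{2n},q_{2n+1}\in\mathbb C[\lambda_0,c]$ whose degrees in $\lambda_0$ are at most $9n+4$ and $9n+8$ respectively (the square roots being the branches consistent with $R_{-1}=\sqrt\Delta=\lambda_0^{-1/2}(4\lambda_0^3-c)^{1/2}$).
   Context: Let $\eta$ be a large parameter and $c\in\mathbb C$. $(H_{\rm II})$: $\frac{d\lambda}{dt}=\eta\nu$, $\frac{d\nu}{dt}=\eta(2\lambda^3+t\lambda+c)$. Let $\lambda_0(t,c)$ be a branch of $2\lambda_0^3+t\lambda_0+c=0$, so that $\Delta:=6\lambda_0^2+t=(4\lambda_0^3-c)/\lambda_0$. The 0-parameter solution $\lambda^{(0)}=\sum_{k\ge0}\eta^{-k}\lambda^{(0)}_k$, $\nu^{(0)}$ is the formal power series solution of $(H_{\rm II})$ with $\lambda^{(0)}_0=\lambda_0$, $\nu^{(0)}_0=0$. $R=\sum_{k\ge-1}\eta^{-k}R_k(t,c)$ is the formal solution of $R^2+\frac{dR}{dt}=\eta^2(6(\lambda^{(0)})^2+t)$ with $R_{-1}=\sqrt\Delta$, i.e. $R_{-1}^2=\Delta$ and $2R_{-1}R_{k+1}+\sum_{k_1+k_2=k,\,k_j\ge0}R_{k_1}R_{k_2}+\frac{dR_k}{dt}=6\sum_{l_1+l_2=k+2,\,l_j\ge0}\lambda^{(0)}_{l_1}\lambda^{(0)}_{l_2}$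 for $k\ge-1$ (the $l_1+l_2=k+2$ sum excluding nothing, with the $k=-1$ case reading $2R_{-1}R_0+\frac{dR_{-1}}{dt}=0$ after cancelling $R_{-1}^2=6\lambda_0^2+t$). *)

theory Defs
  imports "HOL-Analysis.Analysis" "HOL-Computational_Algebra.Polynomial"
begin

text \<open>A polynomial in C[lambda0, c] is represented as a polynomial in lambda0 whose
  coefficients are polynomials in c; its degree in lambda0 is its (outer) degree.\<close>
definition eval2 :: "complex poly poly \<Rightarrow> complex \<Rightarrow> complex \<Rightarrow> complex" where
  "eval2 q x c = poly (map_poly (\<lambda>p. poly p c) q) x"

text \<open>Coefficient equations of the 0-parameter formal solution
  lambda = sum eta^(-k) lam k, nu = sum eta^(-k) nu k of (H_II) on an open set U of t-values
  (c fixed): order eta^1 gives nu_0 = 0 and the cubic for lam_0; order eta^(-k), k >= 0,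
  gives lam_k' = nu_(k+1) and nu_k' = 2 sum_(a+b+d=k+1) lam_a lam_b lam_d + t lam_(k+1).\<close>
definition zero_param_sol ::
  "complex \<Rightarrow> complex set \<Rightarrow> (nat \<Rightarrow> complex \<Rightarrow> complex) \<Rightarrow> (nat \<Rightarrow> complex \<Rightarrow> complex) \<Rightarrow> bool" where
  "zero_param_sol c U lam nu \<longleftrightarrow>
     (\<forall>k. lam k holomorphic_on U \<and> nu k holomorphic_on U) \<and>
     (\<forall>t\<in>U. nu 0 t = 0 \<and> 2 * (lam 0 t)^3 + t * lam 0 t + c = 0) \<and>
     (\<forall>k. \<forall>t\<in>U.
        deriv (lam k) t = nu (Suc k) t \<and>
        deriv (nu k) t =
          2 * (\<Sum>a\<le>Suc k. \<Sum>b\<le>Suc k - a. lam a t * lam b t * lam (Suc k - a - b) t)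
          + t * lam (Suc k) t)"

text \<open>Coefficient equations of R = sum_(k >= -1) eta^(-k) R_k solving
  R^2 + R' = eta^2 (6 lambda^2 + t). Here Rm1 is R_(-1) and R k is R_k for k >= 0.\<close>
definition R_sol ::
  "complex set \<Rightarrow> (nat \<Rightarrow> complex \<Rightarrow> complex) \<Rightarrow> (complex \<Rightarrow> complex) \<Rightarrow> (nat \<Rightarrow> complex \<Rightarrow> complex) \<Rightarrow> bool" where
  "R_sol U lam Rm1 R \<longleftrightarrow>
     Rm1 holomorphic_on U \<and> (\<forall>k. R k holomorphic_on U) \<and>
     (\<forall>t\<in>U. (Rm1 t)^2 = 6 * (lam 0 t)^2 + t) \<and>
     (\<forall>t\<in>U. 2 * Rm1 t * R 0 t + deriv Rm1 t = 0) \<and>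
     (\<forall>k. \<forall>t\<in>U.
        2 * Rm1 t * R (Suc k) t + (\<Sum>k1\<le>k. R k1 t * R (k - k1) t) + deriv (R k) t
        = 6 * (\<Sum>l1\<le>k+2. lam l1 t * lam (k + 2 - l1) t))"

end

theory Submission
  imports Defs
begin

(*
  Write x = lambda_0(t) and D = 4 x^3 - c.  Since D = x * Delta, differentiating
  the cubic 2 x^3 + t x + c = 0 gives x' = -x / Delta = -x^2 / D.  Hence d/dt maps a function
  of the shape P(x) / D^m, with P in C[c][x], to a function of the same shape
  (theta m P)(x) / D^(m+2), where theta m is an explicit polynomial operator raising the
  x-degree by at most 4.  Feeding this into the recursions for lambda_k and R_k gives, by strong
  induction on k,
    lambda_(2m+1) = 0,   lambda_(2m) = L_(2m)(x) / D^(5m-1)  (m >= 1),   lambda_0 = x,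
    R_(2n) = Q_(2n)(x) / D^(5n+2),   R_(2n+1) = x R_(-1) Q_(2n+1)(x) / D^(5n+5),
  where L_k and Q_k are given by polynomial recursions that do not depend on the particular
  solution (the theorem asks for polynomials that work uniformly for all solutions).
*)

lemma eval2_pCons: "eval2 (pCons a p) x c = poly a c + x * eval2 p x c"
  unfolding eval2_def by (simp add: map_poly_pCons)

lemma eval2_0 [simp]: "eval2 0 x c = 0"
  unfolding eval2_def by simp

lemma eval2_add [simp]: "eval2 (p + q) x c = eval2 p x c + eval2 q x c"
proof (induction p arbitrary: q)
  case (pCons a p)
  obtain b q' where q: "q = pCons b q'" by (cases q) auto
  show ?case using pCons.IH[of q'] by (simp add: q eval2_pCons algebra_simps)
qed simp

lemma eval2_smult [simp]: "eval2 (smult a p) x c = poly a c * eval2 p x c"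
  unfolding eval2_def by (simp add: map_poly_smult)

lemma eval2_mult [simp]: "eval2 (p * q) x c = eval2 p x c * eval2 q x c"
  by (induction p) (simp_all add: eval2_pCons algebra_simps)

lemma eval2_minus [simp]: "eval2 (- p) x c = - eval2 p x c"
  using eval2_add[of p "-p" x c] by (simp add: add_eq_0_iff)

lemma eval2_diff [simp]: "eval2 (p - q) x c = eval2 p x c - eval2 q x c"
  using eval2_add[of p "-q" x c] by simp

lemma eval2_1 [simp]: "eval2 1 x c = 1"
  by (simp add: one_pCons eval2_pCons)

lemma eval2_power [simp]: "eval2 (p ^ n) x c = eval2 p x c ^ n"
  by (induction n) auto

lemma eval2_sum: "eval2 (sum f S) x c = (\<Sum>i\<in>S. eval2 (f i) x c)"
  by (induction S rule: infinite_finite_induct) auto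

lemma eval2_DERIV:
  "((\<lambda>y. eval2 P y c) has_field_derivative eval2 (pderiv P) x c) (at x)"
proof -
  have "map_poly (\<lambda>p. poly p c) (pderiv P) = pderiv (map_poly (\<lambda>p. poly p c) P)"
    by (rule poly_eqI) (simp add: coeff_map_poly coeff_pderiv)
  then show ?thesis unfolding eval2_def by (simp add: poly_DERIV)
qed

definition polyX :: "complex poly poly" where "polyX = [:0, 1:]"
definition polyD :: "complex poly poly" where "polyD = [:-[:0, 1:], 0, 0, 4:]"

lemma eval2_polyX [simp]: "eval2 polyX x c = x"
  by (simp add: polyX_def eval2_pCons)

lemma eval2_polyD [simp]: "eval2 polyD x c = 4 * x^3 - c"
  by (simp add: polyD_def eval2_pCons algebra_simps power3_eq_cube)

lemma degree_polyX [simp]: "degree polyX = 1"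
  by (simp add: polyX_def)

lemma degree_polyD_power: "degree (polyD ^ j) \<le> 3 * j"
  using degree_power_le[of polyD j] by (simp add: polyD_def)

(* The t-derivative operator: (P(x)/D^m)' = (theta m P)(x) / D^(m+2) when x' = -x^2/D. *)
definition theta :: "nat \<Rightarrow> complex poly poly \<Rightarrow> complex poly poly" where
  "theta m P = - (polyX^2 * (pderiv P * polyD - smult (of_nat (12 * m)) (polyX^2 * P)))"

lemma degree_mult_le': "degree p \<le> a \<Longrightarrow> degree q \<le> b \<Longrightarrow> degree (p * q) \<le> a + b"
  using degree_mult_le[of p q] by linarith

lemma degree_theta: "degree (theta m P) \<le> degree P + 4"
proof -
  have X2: "degree (polyX^2) \<le> 2"
    using degree_power_le[of polyX 2] by simp
  have "degree (pderiv P * polyD) \<le> degree P + 2"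
  proof (cases "degree P = 0")
    case True
    then have "pderiv P = 0" by (simp add: pderiv_eq_0_iff)
    then show ?thesis by simp
  next
    case False
    then show ?thesis
      using degree_mult_le[of "pderiv P" polyD] by (simp add: degree_pderiv polyD_def)
  qed
  moreover have "degree (smult (of_nat (12 * m)) (polyX^2 * P)) \<le> degree P + 2"
    using degree_smult_le[of "of_nat (12 * m)" "polyX^2 * P"] degree_mult_le'[OF X2 order_refl, of P]
    by linarith
  ultimately have "degree (pderiv P * polyD - smult (of_nat (12 * m)) (polyX^2 * P)) \<le> degree P + 2"
    by (rule degree_diff_le)
  then show ?thesis
    unfolding theta_def degree_minus using degree_mult_le'[OF X2] by fastforce
qed

(* Exponent of D in lambda_k: lambda_(2m) = L_(2m)(x) / D^(5m-1) for m >= 1, and lambda_0 = x. *)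
definition lam_exp :: "nat \<Rightarrow> nat" where
  "lam_exp k = (if k = 0 then 0 else 5 * (k div 2) - 1)"

lemma lam_exp_even: "lam_exp (2 * j) = (if j = 0 then 0 else 5 * j - 1)"
  by (simp add: lam_exp_def)

(* For even i, nu_(i+1) = lambda_i' is (nu_poly i L_i)(x) / D^(nu_exp i); the case i = 0 is
   x' = -x^2/D itself, which has a smaller exponent than theta would produce. *)
definition nu_exp :: "nat \<Rightarrow> nat" where
  "nu_exp i = (if i = 0 then 1 else lam_exp i + 2)"

definition nu_poly :: "nat \<Rightarrow> complex poly poly \<Rightarrow> complex poly poly" where
  "nu_poly i L = (if i = 0 then - (polyX^2) else theta (lam_exp i) L)"

(* For odd k the order eta^(-k) equation for nu_k' reads
     Delta lambda_(k+1) = nu_k' - 2 sum {lambda_a lambda_b lambda_d | a+b+d = k+1, a,b,d <= k},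
   all terms are brought to the common denominator D^(lam_exp (k+1) - 1), and multiplying by x
   turns Delta into D. *)
fun lam_poly :: "nat \<Rightarrow> complex poly poly" where
  "lam_poly 0 = polyX"
| "lam_poly (Suc k) = (if even k then 0 else
     polyX * (theta (nu_exp (k - 1)) (nu_poly (k - 1) (lam_poly (k - 1)))
       - smult 2 (\<Sum>a\<le>Suc k. \<Sum>b\<le>Suc k - a.
           if a \<le> k \<and> b \<le> k \<and> Suc k - a - b \<le> k
           then lam_poly a * lam_poly b * lam_poly (Suc k - a - b)
                * polyD ^ (lam_exp (Suc k) - 1 - (lam_exp a + lam_exp b + lam_exp (Suc k - a - b)))
           else 0)))"

(* The truncated cubic sum occurring in lam_poly (it has to be written out there for the
   termination proof): numerator of sum {lambda_a lambda_b lambda_d | a+b+d = k+1, a,b,d <= k}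
   over D^(lam_exp (k+1) - 1). *)
definition lam_cubic :: "nat \<Rightarrow> complex poly poly" where
  "lam_cubic k = (\<Sum>a\<le>Suc k. \<Sum>b\<le>Suc k - a.
      if a \<le> k \<and> b \<le> k \<and> Suc k - a - b \<le> k
      then lam_poly a * lam_poly b * lam_poly (Suc k - a - b)
           * polyD ^ (lam_exp (Suc k) - 1 - (lam_exp a + lam_exp b + lam_exp (Suc k - a - b)))
      else 0)"

lemma lam_poly_Suc_odd:
  "odd k \<Longrightarrow> lam_poly (Suc k) =
     polyX * (theta (nu_exp (k - 1)) (nu_poly (k - 1) (lam_poly (k - 1))) - smult 2 (lam_cubic k))"
  by (simp add: lam_cubic_def)

lemma lam_poly_odd: "odd k \<Longrightarrow> lam_poly k = 0"
  by (cases k) auto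

declare lam_poly.simps(2) [simp del]

lemma lam_exp_triple:
  assumes "a + b + d = Suc m" "a \<le> m" "b \<le> m" "d \<le> m"
  shows "lam_exp (2 * a) + lam_exp (2 * b) + lam_exp (2 * d) \<le> 5 * m + 3"
  using assms by (simp add: lam_exp_even) linarith

lemma degree_lam_cubic:
  assumes IH: "\<And>i. i \<le> 2 * m + 1 \<Longrightarrow> even i \<Longrightarrow> degree (lam_poly i) + 3 * i \<le> 3 * lam_exp i + 1"
  shows "degree (lam_cubic (2 * m + 1)) \<le> 9 * m + 6"
  unfolding lam_cubic_def
proof (intro degree_sum_le finite_atMost)
  fix a b assume a: "a \<in> {..Suc (2 * m + 1)}" and b: "b \<in> {..Suc (2 * m + 1) - a}"
  define d where "d = Suc (2 * m + 1) - a - b"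
  have abd: "a + b + d = 2 * m + 2" using a b by (simp add: d_def)
  have "degree (lam_poly a * lam_poly b * lam_poly d
          * polyD ^ (5 * m + 3 - (lam_exp a + lam_exp b + lam_exp d))) \<le> 9 * m + 6"
    if small: "a \<le> 2 * m + 1" "b \<le> 2 * m + 1" "d \<le> 2 * m + 1"
  proof (cases "even a \<and> even b \<and> even d")
    case False
    then show ?thesis by (auto simp: lam_poly_odd)
  next
    case True
    then obtain a' b' d' where ev: "a = 2 * a'" "b = 2 * b'" "d = 2 * d'" by (auto elim!: evenE)
    have e3: "lam_exp a + lam_exp b + lam_exp d \<le> 5 * m + 3"
      using lam_exp_triple[of a' b' d' m] abd small ev by simp
    have "degree (lam_poly a * lam_poly b * lam_poly d
            * polyD ^ (5 * m + 3 - (lam_exp a + lam_exp b + lam_exp d)))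
          \<le> degree (lam_poly a) + degree (lam_poly b) + degree (lam_poly d)
            + 3 * (5 * m + 3 - (lam_exp a + lam_exp b + lam_exp d))"
      by (intro degree_mult_le' degree_polyD_power order_refl)
    also have "\<dots> \<le> 9 * m + 6"
      using IH[of a] IH[of b] IH[of d] small True e3 abd by linarith
    finally show ?thesis .
  qed
  moreover have "lam_exp (Suc (2 * m + 1)) - 1 = 5 * m + 3"
    by (simp add: lam_exp_def)
  ultimately show "degree (if a \<le> 2 * m + 1 \<and> b \<le> 2 * m + 1 \<and> Suc (2 * m + 1) - a - b \<le> 2 * m + 1
      then lam_poly a * lam_poly b * lam_poly (Suc (2 * m + 1) - a - b)
           * polyD ^ (lam_exp (Suc (2 * m + 1)) - 1
                      - (lam_exp a + lam_exp b + lam_exp (Suc (2 * m + 1) - a - b)))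
      else 0) \<le> 9 * m + 6"
    unfolding d_def[symmetric] by auto
qed

lemma degree_nu_poly:
  assumes "degree (lam_poly (2 * m)) + 3 * (2 * m) \<le> 3 * lam_exp (2 * m) + 1"
  shows "degree (nu_poly (2 * m) (lam_poly (2 * m))) \<le> 9 * m + 2"
proof (cases "m = 0")
  case True
  then show ?thesis using degree_power_le[of polyX 2] by (simp add: nu_poly_def)
next
  case False
  then have "degree (lam_poly (2 * m)) \<le> 9 * m - 2"
    using assms by (simp add: lam_exp_even)
  then show ?thesis
    using False degree_theta[of "lam_exp (2 * m)" "lam_poly (2 * m)"] by (simp add: nu_poly_def)
qed

(* L_k(x)/D^(lam_exp k) has weight at most 1 - 3k when x has weight 1 and D weight 3; this is
   the form of the degree bound that propagates through the recursion. *)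
lemma lam_poly_weight:
  "even k \<Longrightarrow> degree (lam_poly k) + 3 * k \<le> 3 * lam_exp k + 1"
proof (induction k rule: less_induct)
  case (less k)
  show ?case
  proof (cases k)
    case 0
    then show ?thesis by (simp add: lam_exp_def)
  next
    case (Suc j)
    then obtain m where j: "j = 2 * m + 1" using less.prems by (metis even_Suc oddE)
    have IH: "\<And>i. i \<le> 2 * m + 1 \<Longrightarrow> even i \<Longrightarrow> degree (lam_poly i) + 3 * i \<le> 3 * lam_exp i + 1"
      using less.IH Suc j by simp
    have "degree (theta (nu_exp (2 * m)) (nu_poly (2 * m) (lam_poly (2 * m)))) \<le> 9 * m + 6"
      using degree_theta[of "nu_exp (2 * m)" "nu_poly (2 * m) (lam_poly (2 * m))"]
        degree_nu_poly[OF IH[of "2 * m"]] by simp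
    moreover have "degree (smult 2 (lam_cubic (2 * m + 1))) \<le> 9 * m + 6"
      using degree_smult_le degree_lam_cubic[OF IH] by (rule order_trans)
    ultimately have "degree (theta (nu_exp (2 * m)) (nu_poly (2 * m) (lam_poly (2 * m)))
                       - smult 2 (lam_cubic (2 * m + 1))) \<le> 9 * m + 6"
      by (rule degree_diff_le)
    then have "degree (lam_poly k) \<le> 9 * m + 7"
      using Suc j lam_poly_Suc_odd[of j] degree_mult_le'[of polyX 1] by fastforce
    then show ?thesis using Suc j by (simp add: lam_exp_def)
  qed
qed

(* Exponent of D in R_k: R_(2n) = Q_(2n)(x)/D^(5n+2) and R_(2n+1) = x R_(-1) Q_(2n+1)(x)/D^(5n+5). *)
definition R_exp :: "nat \<Rightarrow> nat" where
  "R_exp k = (if even k then 5 * (k div 2) + 2 else 5 * (k div 2) + 5)"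

lemma R_exp_even: "R_exp (2 * a) = 5 * a + 2"
  by (simp add: R_exp_def)

lemma R_exp_odd: "R_exp (Suc (2 * a)) = 5 * a + 5"
  by (simp add: R_exp_def)

(* Q_0 = (c/4) x + 2 x^4, i.e. R_0 = -R_(-1)'/(2 R_(-1)) = x (8x^3 + c)/(4 D^2). *)
definition R0_poly :: "complex poly poly" where
  "R0_poly = [:0, [:0, 1/4:], 0, 0, 2:]"

definition lam_square :: "nat \<Rightarrow> complex poly poly" where
  "lam_square j = (\<Sum>l\<le>j + 2. lam_poly l * lam_poly (j + 2 - l)
                     * polyD ^ (R_exp j + 2 - lam_exp l - lam_exp (j + 2 - l)))"

(* The numerators Q_k, read off from 2 R_(-1) R_(k+1) = 6 sum lambda lambda - sum R R - R_k'.
   For even k the right-hand side is a function of x, and dividing by 2 R_(-1) uses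
   1/R_(-1) = x R_(-1)/D; a product of two odd-index terms contributes x^2 R_(-1)^2 = x D.
   For odd k every term carries a factor R_(-1), which cancels; the derivative of the factor
   R_(-1) in R_k produces -2 R_(-1) R_0. *)
fun R_poly :: "nat \<Rightarrow> complex poly poly" where
  "R_poly 0 = R0_poly"
| "R_poly (Suc k) = (if even k then
      smult [:1/2:] (smult [:6:] (lam_square k)
        - (\<Sum>i\<le>k. if even i then R_poly i * R_poly (k - i) else polyX * R_poly i * R_poly (k - i))
        - theta (R_exp k) (R_poly k))
    else smult [:-1/2:] (polyX * (\<Sum>i\<le>k. R_poly i * R_poly (k - i))
        - smult [:2:] (R0_poly * polyX * R_poly k) + theta (R_exp k) (polyX * R_poly k)))"

(* Numerators of the convolution sum {R_i R_(k-i) | i <= k}: for even k over D^(R_exp k + 2),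
   for odd k over D^(R_exp k + 2) after taking out the common factor x R_(-1). *)
definition R_conv_even :: "nat \<Rightarrow> complex poly poly" where
  "R_conv_even k = (\<Sum>i\<le>k. if even i then R_poly i * R_poly (k - i) else polyX * R_poly i * R_poly (k - i))"

definition R_conv_odd :: "nat \<Rightarrow> complex poly poly" where
  "R_conv_odd k = (\<Sum>i\<le>k. R_poly i * R_poly (k - i))"

lemma R_poly_Suc_even:
  "even k \<Longrightarrow> R_poly (Suc k) =
     smult [:1/2:] (smult [:6:] (lam_square k) - R_conv_even k - theta (R_exp k) (R_poly k))"
  by (simp add: R_conv_even_def)

lemma R_poly_Suc_odd:
  "odd k \<Longrightarrow> R_poly (Suc k) = smult [:-1/2:] (polyX * R_conv_odd k
     - smult [:2:] (R0_poly * polyX * R_poly k) + theta (R_exp k) (polyX * R_poly k))"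
  by (simp add: R_conv_odd_def)

declare R_poly.simps(2) [simp del]

definition R_deg :: "nat \<Rightarrow> nat" where
  "R_deg k = (if even k then 9 * (k div 2) + 4 else 9 * (k div 2) + 8)"

(* Each even-even product in lam_square has weight 2 - 3(2n+2), hence degree <= 9n+8. *)
lemma degree_lam_square: "degree (lam_square (2 * n)) \<le> 9 * n + 8"
  unfolding lam_square_def
proof (intro degree_sum_le finite_atMost)
  fix l assume l: "l \<in> {..2 * n + 2}"
  show "degree (lam_poly l * lam_poly (2 * n + 2 - l)
          * polyD ^ (R_exp (2 * n) + 2 - lam_exp l - lam_exp (2 * n + 2 - l))) \<le> 9 * n + 8"
  proof (cases "even l")
    case False
    then show ?thesis by (simp add: lam_poly_odd)
  next
    case True
    then obtain a where a: "l = 2 * a" by (auto elim!: evenE)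
    have l2: "2 * n + 2 - l = 2 * (Suc n - a)" using a l by auto
    have e: "lam_exp l + lam_exp (2 * n + 2 - l) \<le> 5 * n + 4"
      using a l2 l by (simp add: lam_exp_even) linarith
    have "degree (lam_poly l * lam_poly (2 * n + 2 - l)
            * polyD ^ (R_exp (2 * n) + 2 - lam_exp l - lam_exp (2 * n + 2 - l)))
          \<le> degree (lam_poly l) + degree (lam_poly (2 * n + 2 - l))
            + 3 * (R_exp (2 * n) + 2 - lam_exp l - lam_exp (2 * n + 2 - l))"
      by (intro degree_mult_le' degree_polyD_power order_refl)
    also have "\<dots> \<le> 9 * n + 8"
      using lam_poly_weight[of l] lam_poly_weight[of "2 * n + 2 - l"] True l2 e l
      by (simp add: R_exp_even)
    finally show ?thesis .
  qed
qed

lemma degree_R_conv_even: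
  assumes IH: "\<And>i. i \<le> 2 * n \<Longrightarrow> degree (R_poly i) \<le> R_deg i"
  shows "degree (R_conv_even (2 * n)) \<le> 9 * n + 8"
  unfolding R_conv_even_def
proof (intro degree_sum_le finite_atMost)
  fix i assume i: "i \<in> {..2 * n}"
  show "degree (if even i then R_poly i * R_poly (2 * n - i)
                else polyX * R_poly i * R_poly (2 * n - i)) \<le> 9 * n + 8"
  proof (cases "even i")
    case True
    then obtain a where a: "i = 2 * a" by (auto elim!: evenE)
    have "2 * n - i = 2 * (n - a)" using a i by auto
    then have "R_deg i + R_deg (2 * n - i) = 9 * n + 8"
      using a i by (simp add: R_deg_def)
    moreover have "degree (R_poly i * R_poly (2 * n - i)) \<le> R_deg i + R_deg (2 * n - i)"
      using i by (intro degree_mult_le' IH) auto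
    ultimately show ?thesis using True by simp
  next
    case False
    then obtain a where a: "i = 2 * a + 1" by (metis oddE)
    have "2 * n - i = 2 * (n - a - 1) + 1" using a i by auto
    then have "1 + R_deg i + R_deg (2 * n - i) = 9 * n + 8"
      using a i by (simp add: R_deg_def)
    moreover have "degree (polyX * R_poly i * R_poly (2 * n - i)) \<le> 1 + R_deg i + R_deg (2 * n - i)"
      using i by (intro degree_mult_le' IH) auto
    ultimately show ?thesis using False by simp
  qed
qed

lemma degree_R_conv_odd:
  assumes IH: "\<And>i. i \<le> 2 * n + 1 \<Longrightarrow> degree (R_poly i) \<le> R_deg i"
  shows "degree (R_conv_odd (2 * n + 1)) \<le> 9 * n + 12"
  unfolding R_conv_odd_def
proof (intro degree_sum_le finite_atMost)
  fix i assume i: "i \<in> {..2 * n + 1}"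
  have "R_deg i + R_deg (2 * n + 1 - i) = 9 * n + 12"
  proof (cases "even i")
    case True
    then obtain a where a: "i = 2 * a" by (auto elim!: evenE)
    have "2 * n + 1 - i = 2 * (n - a) + 1" using a i by auto
    then show ?thesis using a i by (simp add: R_deg_def)
  next
    case False
    then obtain a where a: "i = 2 * a + 1" by (metis oddE)
    have "2 * n + 1 - i = 2 * (n - a)" using a i by auto
    then show ?thesis using a i by (simp add: R_deg_def)
  qed
  moreover have "degree (R_poly i * R_poly (2 * n + 1 - i)) \<le> R_deg i + R_deg (2 * n + 1 - i)"
    using i by (intro degree_mult_le' IH) auto
  ultimately show "degree (R_poly i * R_poly (2 * n + 1 - i)) \<le> 9 * n + 12" by simp
qed

lemma degree_R_poly_odd_step:
  assumes IH: "\<And>i. i \<le> 2 * n \<Longrightarrow> degree (R_poly i) \<le> R_deg i"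
  shows "degree (R_poly (2 * n + 1)) \<le> 9 * n + 8"
proof -
  let ?Q = "smult [:6:] (lam_square (2 * n)) - R_conv_even (2 * n) - theta (R_exp (2 * n)) (R_poly (2 * n))"
  have "degree (theta (R_exp (2 * n)) (R_poly (2 * n))) \<le> 9 * n + 8"
    using degree_theta[of "R_exp (2 * n)" "R_poly (2 * n)"] IH[of "2 * n"] by (simp add: R_deg_def)
  moreover have "degree (smult [:6:] (lam_square (2 * n))) \<le> 9 * n + 8"
    using degree_smult_le degree_lam_square by (rule order_trans)
  ultimately have "degree ?Q \<le> 9 * n + 8"
    using degree_R_conv_even[OF IH] by (intro degree_diff_le)
  moreover have "R_poly (2 * n + 1) = smult [:1/2:] ?Q"
    using R_poly_Suc_even[of "2 * n"] by simp
  ultimately show ?thesis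
    using degree_smult_le[of "[:1/2:]" ?Q] by simp
qed

lemma degree_R_poly_even_step:
  assumes IH: "\<And>i. i \<le> 2 * n + 1 \<Longrightarrow> degree (R_poly i) \<le> R_deg i"
  shows "degree (R_poly (2 * n + 2)) \<le> 9 * n + 13"
proof -
  let ?j = "2 * n + 1"
  let ?Q = "polyX * R_conv_odd ?j - smult [:2:] (R0_poly * polyX * R_poly ?j)
              + theta (R_exp ?j) (polyX * R_poly ?j)"
  have Rj: "degree (R_poly ?j) \<le> 9 * n + 8"
    using IH[of ?j] by (simp add: R_deg_def)
  have "degree (polyX * R_conv_odd ?j) \<le> 9 * n + 13"
    using degree_mult_le'[OF _ degree_R_conv_odd[of n, OF IH], of polyX 1] by simp
  moreover have "degree (smult [:2:] (R0_poly * polyX * R_poly ?j)) \<le> 9 * n + 13"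
  proof -
    have "degree (R0_poly * polyX * R_poly ?j) \<le> 4 + 1 + (9 * n + 8)"
      by (intro degree_mult_le' Rj) (auto simp: R0_poly_def)
    then show ?thesis using degree_smult_le[of "[:2:]" "R0_poly * polyX * R_poly ?j"] by simp
  qed
  moreover have "degree (theta (R_exp ?j) (polyX * R_poly ?j)) \<le> 9 * n + 13"
    using degree_theta[of "R_exp ?j" "polyX * R_poly ?j"] degree_mult_le'[OF _ Rj, of polyX 1]
    by simp
  ultimately have "degree ?Q \<le> 9 * n + 13"
    by (intro degree_add_le degree_diff_le)
  moreover have "R_poly (2 * n + 2) = smult [:-1/2:] ?Q"
    using R_poly_Suc_odd[of ?j] by simp
  ultimately show ?thesis
    using degree_smult_le[of "[:-1/2:]" ?Q] by simp
qed

lemma R_poly_degree: "degree (R_poly k) \<le> R_deg k"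
proof (induction k rule: less_induct)
  case (less k)
  show ?case
  proof (cases k)
    case 0
    then show ?thesis by (simp add: R0_poly_def R_deg_def)
  next
    case (Suc j)
    have IH: "\<And>i. i \<le> j \<Longrightarrow> degree (R_poly i) \<le> R_deg i"
      using less.IH Suc by simp
    show ?thesis
    proof (cases "even j")
      case True
      then obtain n where "j = 2 * n" by (auto elim!: evenE)
      then show ?thesis using degree_R_poly_odd_step[of n] IH Suc by (simp add: R_deg_def)
    next
      case False
      then obtain n where "j = 2 * n + 1" by (metis oddE)
      then show ?thesis using degree_R_poly_even_step[of n] IH Suc by (simp add: R_deg_def)
    qed
  qed
qed

definition trunc_cubic :: "(nat \<Rightarrow> 'a::comm_ring_1) \<Rightarrow> nat \<Rightarrow> 'a" where
  "trunc_cubic f k = (\<Sum>a\<le>Suc k. \<Sum>b\<le>Suc k - a.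
      if a \<le> k \<and> b \<le> k \<and> Suc k - a - b \<le> k then f a * f b * f (Suc k - a - b) else 0)"

lemma cubic_sum_split:
  fixes f :: "nat \<Rightarrow> 'a::comm_ring_1"
  shows "(\<Sum>a\<le>Suc k. \<Sum>b\<le>Suc k - a. f a * f b * f (Suc k - a - b))
         = trunc_cubic f k + 3 * (f 0)^2 * f (Suc k)"
proof -
  let ?N = "Suc k" and ?K = "(f 0)^2 * f (Suc k)"
  let ?T = "\<lambda>a b. if a \<le> k \<and> b \<le> k \<and> ?N - a - b \<le> k then f a * f b * f (?N - a - b) else 0"
  let ?E = "\<lambda>a b. (if a = ?N \<and> b = 0 then ?K else 0) + (if a = 0 \<and> b = ?N then ?K else 0)
                  + (if a = 0 \<and> b = 0 then ?K else 0)"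
  have split_term: "f a * f b * f (?N - a - b) = ?T a b + ?E a b" if "a \<le> ?N" "b \<le> ?N - a" for a b
  proof (cases "a \<le> k \<and> b \<le> k \<and> ?N - a - b \<le> k")
    case True
    then show ?thesis using that by auto
  next
    case False
    then have "(a = ?N \<and> b = 0) \<or> (a = 0 \<and> b = ?N) \<or> (a = 0 \<and> b = 0)" using that by arith
    then consider "a = ?N" "b = 0" | "a = 0" "b = ?N" | "a = 0" "b = 0" by blast
    then show ?thesis by cases (auto simp: power2_eq_square algebra_simps)
  qed
  have extra: "(\<Sum>a\<le>?N. \<Sum>b\<le>?N - a. ?E a b) = 3 * ?K"
  proof -
    have "(\<Sum>a\<le>?N. \<Sum>b\<le>?N - a. (if a = ?N \<and> b = 0 then ?K else 0)) = ?K"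
      by (simp add: sum.If_cases)
    moreover have "(\<Sum>a\<le>?N. \<Sum>b\<le>?N - a. (if a = 0 \<and> b = ?N then ?K else 0)) = ?K"
      by (subst sum.atMost_Suc_shift) simp
    moreover have "(\<Sum>a\<le>?N. \<Sum>b\<le>?N - a. (if a = 0 \<and> b = 0 then ?K else 0)) = ?K"
      by (subst sum.atMost_Suc_shift) simp
    ultimately show ?thesis by (simp only: sum.distrib) simp
  qed
  have "(\<Sum>a\<le>?N. \<Sum>b\<le>?N - a. f a * f b * f (?N - a - b)) = (\<Sum>a\<le>?N. \<Sum>b\<le>?N - a. ?T a b + ?E a b)"
    by (intro sum.cong refl split_term) auto
  also have "\<dots> = (\<Sum>a\<le>?N. \<Sum>b\<le>?N - a. ?T a b) + (\<Sum>a\<le>?N. \<Sum>b\<le>?N - a. ?E a b)"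
    by (simp only: sum.distrib)
  also have "\<dots> = trunc_cubic f k + 3 * ?K"
    unfolding trunc_cubic_def extra ..
  finally show ?thesis by (simp add: algebra_simps)
qed

lemma frac_mult2:
  fixes D :: complex
  assumes "D \<noteq> 0" "e1 + e2 + p = N"
  shows "A / D^e1 * (B / D^e2) = (A * B * D^p) / D^N"
  using assms(1) unfolding assms(2)[symmetric] by (simp add: power_add field_simps)

lemma frac_mult3:
  fixes D :: complex
  assumes "D \<noteq> 0" "e1 + e2 + e3 + p = N"
  shows "A / D^e1 * (B / D^e2) * (C / D^e3) = (A * B * C * D^p) / D^N"
  using assms(1) unfolding assms(2)[symmetric] by (simp add: power_add field_simps)

lemma frac_mult_scaled:
  fixes D :: complex
  assumes "r1 + r2 = N" "D \<noteq> 0"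
  shows "A / D^r1 * (K * B / D^r2) = K * (A * B) / D^N"
    and "K * A / D^r1 * (B / D^r2) = K * (A * B) / D^N"
  using assms(2) unfolding assms(1)[symmetric] by (simp_all add: power_add field_simps)

(* Two factors x R_(-1) multiply to x^2 Delta = x D, since R_(-1)^2 = Delta and D = x Delta. *)
lemma frac_mult_odd_odd:
  fixes x Rm E1 E2 D Del :: complex
  assumes "Rm^2 = Del" "D = x * Del" "D \<noteq> 0" "r1 + r2 = Suc N"
  shows "x * Rm * E1 / D^r1 * (x * Rm * E2 / D^r2) = x * E1 * E2 / D^N"
proof -
  have "x \<noteq> 0" "Del \<noteq> 0" using assms(2,3) by auto
  have "x * Rm * E1 / D^r1 * (x * Rm * E2 / D^r2) = x * x * Rm^2 * E1 * E2 / D^(Suc N)"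
    unfolding assms(4)[symmetric] by (simp add: power_add field_simps power2_eq_square)
  also have "\<dots> = x * E1 * E2 / D^N"
    using \<open>x \<noteq> 0\<close> \<open>Del \<noteq> 0\<close> unfolding assms(1) assms(2) by (simp add: field_simps)
  finally show ?thesis .
qed

lemma divide_by_Delta:
  fixes L A B D x Del :: complex
  assumes "Del * L = A / D^n - 2 * (B / D^n)" "D = x * Del" "x \<noteq> 0" "Del \<noteq> 0"
  shows "L = x * (A - 2 * B) / D^(Suc n)"
proof -
  have D: "D \<noteq> 0" using assms by simp
  have "Del * L * D^n = A - 2 * B" using assms(1) D by (simp add: field_simps)
  then have "x * (A - 2 * B) = L * D^(Suc n)"
    unfolding assms(2) by (auto simp: algebra_simps power_mult_distrib)
  then show ?thesis using D by (simp add: field_simps)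
qed

(* Dividing by 2 R_(-1): since R_(-1)^2 = Delta = D/x, 1/R_(-1) = x R_(-1) / D. *)
lemma divide_by_2Rm1:
  fixes R Rm I D x Del :: complex
  assumes "2 * Rm * R = I / D^N" "Rm^2 = Del" "D = x * Del" "Rm \<noteq> 0" "x \<noteq> 0" "Del \<noteq> 0"
  shows "R = x * Rm * ((1/2) * I) / D^(Suc N)"
proof -
  have D: "D \<noteq> 0" using assms by simp
  have "R = I / (2 * Rm * D^N)" using assms(1,4) D by (simp add: field_simps)
  also have "\<dots> = I * Rm / (2 * Rm^2 * D^N)" using assms(4) by (simp add: field_simps power2_eq_square)
  also have "\<dots> = x * Rm * ((1/2) * I) / D^(Suc N)" using assms(2,3,5,6) D by (simp add: field_simps)
  finally show ?thesis .
qed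

(* For odd k every term of the R-recursion carries the factor R_(-1), which cancels; the term
   with P0 comes from R_(-1)' = -2 R_(-1) R_0. *)
lemma solve_odd_index_eq:
  fixes R Rm S P0 Q Qp x D :: complex
  assumes "2 * Rm * R + x * Rm * S / D^N + dR = 0"
    "dR = -2 * Rm * (P0 / D^2) * (Q / D^M) + Qp / D^N * Rm" "M + 2 = N" "Rm \<noteq> 0" "D \<noteq> 0"
  shows "R = (-1/2) * (x * S - 2 * (P0 * Q) + Qp) / D^N"
proof -
  let ?A = "x * S - 2 * (P0 * Q) + Qp"
  have dR: "dR = Rm * (Qp - 2 * (P0 * Q)) / D^N"
    unfolding assms(2) assms(3)[symmetric] power_add using assms(5) by (simp add: field_simps)
  have "2 * Rm * R = - (x * Rm * S / D^N) - dR"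
    using assms(1) by algebra
  also have "\<dots> = Rm * (- (?A / D^N))"
    unfolding dR using assms(5) by (simp add: field_simps)
  finally have "Rm * (2 * R) = Rm * (- (?A / D^N))"
    by (simp add: mult.assoc mult.left_commute)
  then have "2 * R = - (?A / D^N)"
    using assms(4) mult_left_cancel by blast
  then show ?thesis using assms(5) by (simp add: field_simps)
qed

lemma sum_eval2_frac:
  fixes g :: "nat \<Rightarrow> complex poly poly"
  assumes "\<And>i. i \<in> S \<Longrightarrow> f i = K * eval2 (g i) y c / D"
  shows "sum f S = K * eval2 (sum g S) y c / D"
  using assms by (simp add: eval2_sum sum_divide_distrib sum_distrib_left)

(* The quotient rule for P(x)/D^m combined with x' = -x^2/D, written in closed form. *)
lemma quotient_rule_closed_form:
  fixes D :: complex
  assumes "D \<noteq> 0"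
  shows "(A * D^m - B * (of_nat m * D^(m - 1) * (12 * x^2))) / (D^m * D^m) * (- (x^2) / D)
         = - (x^2 * (A * D - of_nat (12 * m) * (x^2 * B))) / D^(m + 2)"
proof (cases m)
  case 0
  then show ?thesis using assms by (simp add: field_simps)
next
  case (Suc m')
  then show ?thesis using assms by (simp add: field_simps power2_eq_square)
qed

(* The value of R_0 = -R_(-1)'/(2 R_(-1)) after inserting 2 R_(-1) R_(-1)' = 12 x x' + 1,
   x' = -x^2/D and R_(-1)^2 = D/x. *)
lemma R0_closed_form:
  fixes x D c :: complex
  assumes "D = 4 * x^3 - c" "D \<noteq> 0" "x \<noteq> 0"
  shows "- (12 * x * (- (x^2) / D) + 1) / (4 * (D / x)) = (c / 4 * x + 2 * x^4) / D^2"
proof -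
  have "- (12 * x * (- (x^2) / D) + 1) / (4 * (D / x)) = x * (12 * x^3 - D) / (4 * D^2)"
    using assms(2,3) by (simp add: field_simps power2_eq_square power3_eq_cube)
  also have "\<dots> = x * (8 * x^3 + c) / (4 * D^2)"
    using assms(1) by simp
  also have "\<dots> = (c / 4 * x + 2 * x^4) / D^2"
    using assms(2) by (simp add: field_simps power_Suc power_Suc2 numeral_eq_Suc)
  finally show ?thesis .
qed

locale PII_solution =
  fixes c :: complex and U :: "complex set" and lam nu :: "nat \<Rightarrow> complex \<Rightarrow> complex"
    and Rm1 :: "complex \<Rightarrow> complex" and R :: "nat \<Rightarrow> complex \<Rightarrow> complex"
  assumes open_U: "open U"
    and zero_param: "zero_param_sol c U lam nu"
    and R_solution: "R_sol U lam Rm1 R"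
    and nonzero: "\<forall>t\<in>U. lam 0 t \<noteq> 0 \<and> 6 * (lam 0 t)^2 + t \<noteq> 0"
begin

abbreviation ev :: "complex poly poly \<Rightarrow> complex \<Rightarrow> complex" where
  "ev P t \<equiv> eval2 P (lam 0 t) c"

abbreviation Dt :: "complex \<Rightarrow> complex" where
  "Dt t \<equiv> 4 * (lam 0 t)^3 - c"

lemma nu0: "t \<in> U \<Longrightarrow> nu 0 t = 0"
  using zero_param unfolding zero_param_sol_def by blast

lemma deriv_lam: "t \<in> U \<Longrightarrow> deriv (lam k) t = nu (Suc k) t"
  using zero_param unfolding zero_param_sol_def by blast

lemma deriv_nu: "t \<in> U \<Longrightarrow> deriv (nu k) t =
    2 * (\<Sum>a\<le>Suc k. \<Sum>b\<le>Suc k - a. lam a t * lam b t * lam (Suc k - a - b) t) + t * lam (Suc k) t"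
  using zero_param unfolding zero_param_sol_def by blast

lemma cubic: "t \<in> U \<Longrightarrow> 2 * (lam 0 t)^3 + t * lam 0 t + c = 0"
  using zero_param unfolding zero_param_sol_def by blast

lemma Rm1_square: "t \<in> U \<Longrightarrow> (Rm1 t)^2 = 6 * (lam 0 t)^2 + t"
  using R_solution unfolding R_sol_def by blast

lemma R0_eq: "t \<in> U \<Longrightarrow> 2 * Rm1 t * R 0 t + deriv Rm1 t = 0"
  using R_solution unfolding R_sol_def by blast

lemma R_Suc_eq: "t \<in> U \<Longrightarrow> 2 * Rm1 t * R (Suc k) t + (\<Sum>i\<le>k. R i t * R (k - i) t) + deriv (R k) t
    = 6 * (\<Sum>l\<le>k + 2. lam l t * lam (k + 2 - l) t)"
  using R_solution unfolding R_sol_def by blast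

lemma lam0_nonzero: "t \<in> U \<Longrightarrow> lam 0 t \<noteq> 0"
  using nonzero by auto

lemma Delta_nonzero: "t \<in> U \<Longrightarrow> 6 * (lam 0 t)^2 + t \<noteq> 0"
  using nonzero by auto

lemma D_eq: "t \<in> U \<Longrightarrow> Dt t = lam 0 t * (6 * (lam 0 t)^2 + t)"
  using cubic[of t] by (simp add: algebra_simps power3_eq_cube power2_eq_square)

lemma D_nonzero: "t \<in> U \<Longrightarrow> Dt t \<noteq> 0"
  using D_eq[of t] nonzero by auto

lemma Rm1_nonzero: "t \<in> U \<Longrightarrow> Rm1 t \<noteq> 0"
  using Rm1_square[of t] Delta_nonzero[of t] by auto

lemma Rm1_has_deriv: "t \<in> U \<Longrightarrow> (Rm1 has_field_derivative deriv Rm1 t) (at t)"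
  using R_solution holomorphic_on_imp_differentiable_at[OF _ open_U] DERIV_deriv_iff_field_differentiable
  unfolding R_sol_def by blast

(* Implicit differentiation of the cubic: x' = -x / Delta = -x^2 / D. *)
lemma lam0_has_deriv:
  assumes t: "t \<in> U"
  shows "(lam 0 has_field_derivative (- ((lam 0 t)^2) / Dt t)) (at t)"
proof -
  let ?x = "lam 0 t" and ?x' = "deriv (lam 0) t"
  have "lam 0 holomorphic_on U"
    using zero_param unfolding zero_param_sol_def by blast
  then have d: "(lam 0 has_field_derivative ?x') (at t)"
    using holomorphic_on_imp_differentiable_at[OF _ open_U t] DERIV_deriv_iff_field_differentiable
    by blast
  have g: "((\<lambda>s. 2 * (lam 0 s)^3 + s * lam 0 s + c) has_field_derivative
             2 * (3 * ?x^2 * ?x') + (?x + t * ?x')) (at t)"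
    by (rule derivative_eq_intros d DERIV_ident refl | simp)+
  have g0: "((\<lambda>s. 2 * (lam 0 s)^3 + s * lam 0 s + c) has_field_derivative 0) (at t)"
    by (rule has_field_derivative_transform_within_open[OF DERIV_const open_U t]) (simp add: cubic)
  have "?x' * (6 * ?x^2 + t) = - ?x + (2 * (3 * ?x^2 * ?x') + (?x + t * ?x'))"
    by (simp add: algebra_simps)
  also have "\<dots> = - ?x"
    using DERIV_unique[OF g g0] by simp
  finally have "?x' * (6 * ?x^2 + t) = - ?x" .
  then have "?x' = - ?x / (6 * ?x^2 + t)"
    using Delta_nonzero[OF t] by (simp add: field_simps)
  also have "\<dots> = - (?x^2) / Dt t"
    using lam0_nonzero[OF t] by (simp add: D_eq[OF t] power2_eq_square)
  finally show ?thesis using d by simp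
qed

lemma frac_has_deriv:
  assumes t: "t \<in> U"
  shows "((\<lambda>s. ev P s / Dt s ^ m) has_field_derivative ev (theta m P) t / Dt t ^ (m + 2)) (at t)"
proof -
  let ?x = "lam 0 t"
  define h where "h y = eval2 P y c / (4 * y^3 - c)^m" for y
  have Dx: "4 * ?x^3 - c \<noteq> 0" using D_nonzero[OF t] .
  have dQ: "((\<lambda>y. (4 * y^3 - c)^m) has_field_derivative
              of_nat m * (4 * ?x^3 - c)^(m - 1) * (12 * ?x^2)) (at ?x)"
    by (rule derivative_eq_intros DERIV_ident refl | simp)+
  have dh: "(h has_field_derivative
      (eval2 (pderiv P) ?x c * (4 * ?x^3 - c)^m - eval2 P ?x c * (of_nat m * (4 * ?x^3 - c)^(m - 1) * (12 * ?x^2)))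
        / ((4 * ?x^3 - c)^m * (4 * ?x^3 - c)^m)) (at ?x)"
    unfolding h_def using DERIV_divide[OF eval2_DERIV dQ] Dx by simp
  have "(\<lambda>s. ev P s / Dt s ^ m) = (\<lambda>s. h (lam 0 s))"
    by (simp add: h_def)
  moreover have "ev (theta m P) t = - (?x^2 * (eval2 (pderiv P) ?x c * (4 * ?x^3 - c)
                                         - of_nat (12 * m) * (?x^2 * eval2 P ?x c)))"
    by (simp add: theta_def)
  ultimately show ?thesis
    using DERIV_chain2[OF dh lam0_has_deriv[OF t]] quotient_rule_closed_form[OF Dx] by simp
qed

lemma frac_deriv:
  assumes "\<forall>s\<in>U. f s = ev P s / Dt s ^ m" "t \<in> U"
  shows "deriv f t = ev (theta m P) t / Dt t ^ (m + 2)"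
  using has_field_derivative_transform_within_open[OF frac_has_deriv[OF assms(2)] open_U assms(2)]
    assms(1) by (simp add: DERIV_imp_deriv)

lemma zero_deriv:
  assumes "\<forall>s\<in>U. f s = 0" "t \<in> U"
  shows "deriv f t = 0"
  using has_field_derivative_transform_within_open[OF DERIV_const open_U assms(2)] assms(1)
  by (simp add: DERIV_imp_deriv)

(* R_0 = -R_(-1)'/(2 R_(-1)), and 2 R_(-1) R_(-1)' = (R_(-1)^2)' = 12 x x' + 1. *)
lemma R0_value:
  assumes t: "t \<in> U"
  shows "R 0 t = ev R0_poly t / Dt t ^ 2"
proof -
  let ?x = "lam 0 t" and ?r = "deriv Rm1 t"
  have g1: "((\<lambda>s. (Rm1 s)^2) has_field_derivative of_nat 2 * (?r * (Rm1 t)^(2 - Suc 0))) (at t)"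
    by (rule DERIV_power Rm1_has_deriv[OF t])+
  have g2: "((\<lambda>s. 6 * (lam 0 s)^2 + s) has_field_derivative 12 * ?x * (- (?x^2) / Dt t) + 1) (at t)"
    by (rule derivative_eq_intros lam0_has_deriv[OF t] | simp)+
  have "((\<lambda>s. 6 * (lam 0 s)^2 + s) has_field_derivative of_nat 2 * (?r * (Rm1 t)^(2 - Suc 0))) (at t)"
    using has_field_derivative_transform_within_open[OF g1 open_U t] Rm1_square by simp
  then have dsq: "2 * Rm1 t * ?r = 12 * ?x * (- (?x^2) / Dt t) + 1"
    using DERIV_unique[OF _ g2] by (simp add: algebra_simps)
  have D: "Dt t \<noteq> 0" and x: "?x \<noteq> 0" and Rm: "Rm1 t \<noteq> 0"
    using D_nonzero[OF t] lam0_nonzero[OF t] Rm1_nonzero[OF t] .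
  have "2 * Rm1 t * R 0 t = - ?r"
    using R0_eq[OF t] by (simp add: eq_neg_iff_add_eq_0)
  then have "R 0 t = - ?r / (2 * Rm1 t)"
    using Rm by (simp add: field_simps)
  also have "\<dots> = - (2 * Rm1 t * ?r) / (4 * (Rm1 t)^2)"
    using Rm by (simp add: field_simps power2_eq_square)
  also have "\<dots> = - (12 * ?x * (- (?x^2) / Dt t) + 1) / (4 * (Dt t / ?x))"
    using D_eq[OF t] x by (simp add: dsq Rm1_square[OF t])
  also have "\<dots> = (c / 4 * ?x + 2 * ?x^4) / Dt t ^ 2"
    by (rule R0_closed_form[OF refl D x])
  also have "\<dots> = ev R0_poly t / Dt t ^ 2"
    by (simp add: R0_poly_def eval2_pCons algebra_simps power4_eq_xxxx)
  finally show ?thesis .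
qed

(* The order eta^(-j) equation for nu_j' with the three terms containing lambda_(j+1) collected:
   Delta lambda_(j+1) = nu_j' - 2 (truncated cubic sum). *)
lemma lam_recursion:
  "t \<in> U \<Longrightarrow> (6 * (lam 0 t)^2 + t) * lam (Suc j) t = deriv (nu j) t - 2 * trunc_cubic (\<lambda>i. lam i t) j"
  using deriv_nu[of t j] cubic_sum_split[of "\<lambda>i. lam i t" j] by (simp add: algebra_simps power2_eq_square)

(* If all lambda_i with odd i <= j vanish (j even), so does lambda_(j+1): nu_j is the
   derivative of an odd-index lambda (or nu_0 = 0), and every truncated cubic term has an odd
   index because the indices add up to the odd number j+1. *)
lemma lam_vanish_step:
  assumes "even j" and odd_zero: "\<And>i s. i \<le> j \<Longrightarrow> odd i \<Longrightarrow> s \<in> U \<Longrightarrow> lam i s = 0"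
    and t: "t \<in> U"
  shows "lam (Suc j) t = 0"
proof -
  have "deriv (nu j) t = 0"
  proof (cases j)
    case 0
    then show ?thesis using zero_deriv[OF _ t] nu0 by blast
  next
    case (Suc i)
    then have "\<forall>s\<in>U. lam i s = 0" using odd_zero \<open>even j\<close> by simp
    then have "\<forall>s\<in>U. nu j s = 0" using zero_deriv deriv_lam Suc by metis
    then show ?thesis using zero_deriv[OF _ t] by blast
  qed
  moreover have "trunc_cubic (\<lambda>i. lam i t) j = 0"
    unfolding trunc_cubic_def
  proof (intro sum.neutral ballI)
    fix a b assume a: "a \<in> {..Suc j}" and b: "b \<in> {..Suc j - a}"
    have "odd a \<or> odd b \<or> odd (Suc j - a - b)" using \<open>even j\<close> a b by auto
    then have "lam a t * lam b t * lam (Suc j - a - b) t = 0"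
      if "a \<le> j" "b \<le> j" "Suc j - a - b \<le> j"
      using odd_zero[OF _ _ t] that by (elim disjE) auto
    then show "(if a \<le> j \<and> b \<le> j \<and> Suc j - a - b \<le> j
                then lam a t * lam b t * lam (Suc j - a - b) t else 0) = 0"
      by simp
  qed
  ultimately show ?thesis using lam_recursion[OF t, of j] Delta_nonzero[OF t] by simp
qed

lemma nu_rep:
  assumes "\<forall>s\<in>U. lam i s = ev (lam_poly i) s / Dt s ^ lam_exp i" "t \<in> U"
  shows "nu (Suc i) t = ev (nu_poly i (lam_poly i)) t / Dt t ^ nu_exp i"
proof (cases "i = 0")
  case True
  then show ?thesis
    using DERIV_imp_deriv[OF lam0_has_deriv[OF assms(2)]] deriv_lam[OF assms(2), of 0]
    by (simp add: nu_poly_def nu_exp_def)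
next
  case False
  then show ?thesis
    using frac_deriv[OF assms] deriv_lam[OF assms(2), of i] by (simp add: nu_poly_def nu_exp_def)
qed

lemma trunc_cubic_rep:
  assumes rep: "\<And>i s. i \<le> 2 * m + 1 \<Longrightarrow> s \<in> U \<Longrightarrow> lam i s = ev (lam_poly i) s / Dt s ^ lam_exp i"
    and t: "t \<in> U"
  shows "trunc_cubic (\<lambda>i. lam i t) (2 * m + 1) = ev (lam_cubic (2 * m + 1)) t / Dt t ^ (5 * m + 3)"
  unfolding trunc_cubic_def lam_cubic_def eval2_sum sum_divide_distrib
proof (intro sum.cong refl)
  fix a b assume a: "a \<in> {..Suc (2 * m + 1)}" and b: "b \<in> {..Suc (2 * m + 1) - a}"
  define d where "d = Suc (2 * m + 1) - a - b"
  have abd: "a + b + d = 2 * m + 2" using a b by (simp add: d_def)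
  have exp: "lam_exp (Suc (2 * m + 1)) - 1 = 5 * m + 3" by (simp add: lam_exp_def)
  have "lam a t * lam b t * lam d t
        = ev (lam_poly a * lam_poly b * lam_poly d
              * polyD ^ (5 * m + 3 - (lam_exp a + lam_exp b + lam_exp d))) t / Dt t ^ (5 * m + 3)"
    if small: "a \<le> 2 * m + 1" "b \<le> 2 * m + 1" "d \<le> 2 * m + 1"
  proof (cases "even a \<and> even b \<and> even d")
    case False
    have "lam i t = 0" if "i \<le> 2 * m + 1" "odd i" for i
      using rep[OF that(1) t] lam_poly_odd[OF that(2)] by simp
    then show ?thesis using False small by (auto simp: lam_poly_odd)
  next
    case True
    then obtain a' b' d' where ev: "a = 2 * a'" "b = 2 * b'" "d = 2 * d'" by (auto elim!: evenE)
    have e3: "lam_exp a + lam_exp b + lam_exp d \<le> 5 * m + 3"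
      using lam_exp_triple[of a' b' d' m] abd small ev by simp
    have "lam a t * lam b t * lam d t
          = ev (lam_poly a) t / Dt t ^ lam_exp a * (ev (lam_poly b) t / Dt t ^ lam_exp b)
            * (ev (lam_poly d) t / Dt t ^ lam_exp d)"
      using rep[OF small(1) t] rep[OF small(2) t] rep[OF small(3) t] by simp
    also have "\<dots> = ev (lam_poly a) t * ev (lam_poly b) t * ev (lam_poly d) t
            * Dt t ^ (5 * m + 3 - (lam_exp a + lam_exp b + lam_exp d)) / Dt t ^ (5 * m + 3)"
      using e3 by (intro frac_mult3 D_nonzero[OF t]) simp
    finally show ?thesis by simp
  qed
  then show "(if a \<le> 2 * m + 1 \<and> b \<le> 2 * m + 1 \<and> Suc (2 * m + 1) - a - b \<le> 2 * m + 1
              then lam a t * lam b t * lam (Suc (2 * m + 1) - a - b) t else 0)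
        = ev (if a \<le> 2 * m + 1 \<and> b \<le> 2 * m + 1 \<and> Suc (2 * m + 1) - a - b \<le> 2 * m + 1
              then lam_poly a * lam_poly b * lam_poly (Suc (2 * m + 1) - a - b)
                   * polyD ^ (lam_exp (Suc (2 * m + 1)) - 1
                              - (lam_exp a + lam_exp b + lam_exp (Suc (2 * m + 1) - a - b)))
              else 0) t / Dt t ^ (5 * m + 3)"
    unfolding d_def[symmetric] exp by auto
qed

lemma lam_rep_step:
  assumes rep: "\<And>i s. i \<le> 2 * m + 1 \<Longrightarrow> s \<in> U \<Longrightarrow> lam i s = ev (lam_poly i) s / Dt s ^ lam_exp i"
    and t: "t \<in> U"
  shows "lam (2 * m + 2) t = ev (lam_poly (2 * m + 2)) t / Dt t ^ lam_exp (2 * m + 2)"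
proof -
  let ?N = "nu_poly (2 * m) (lam_poly (2 * m))"
  have "\<forall>s\<in>U. lam (2 * m) s = ev (lam_poly (2 * m)) s / Dt s ^ lam_exp (2 * m)"
    using rep[of "2 * m"] by simp
  then have nu_odd: "\<forall>s\<in>U. nu (Suc (2 * m)) s = ev ?N s / Dt s ^ nu_exp (2 * m)"
    using nu_rep by blast
  have exp: "nu_exp (2 * m) + 2 = 5 * m + 3"
    by (simp add: nu_exp_def lam_exp_def)
  have dnu: "deriv (nu (2 * m + 1)) t = ev (theta (nu_exp (2 * m)) ?N) t / Dt t ^ (5 * m + 3)"
    using frac_deriv[OF nu_odd t] unfolding exp by simp
  have "(6 * (lam 0 t)^2 + t) * lam (2 * m + 2) t
        = ev (theta (nu_exp (2 * m)) ?N) t / Dt t ^ (5 * m + 3)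
          - 2 * (ev (lam_cubic (2 * m + 1)) t / Dt t ^ (5 * m + 3))"
    using lam_recursion[OF t, of "2 * m + 1"] dnu trunc_cubic_rep[OF rep t] by simp
  from divide_by_Delta[OF this D_eq[OF t] lam0_nonzero[OF t] Delta_nonzero[OF t]]
  have "lam (2 * m + 2) t = ev (polyX * (theta (nu_exp (2 * m)) ?N - smult 2 (lam_cubic (2 * m + 1)))) t
                             / Dt t ^ Suc (5 * m + 3)"
    by simp
  moreover have "lam_exp (2 * m + 2) = Suc (5 * m + 3)"
    by (simp add: lam_exp_def)
  ultimately show ?thesis
    using lam_poly_Suc_odd[of "2 * m + 1"] by simp
qed

lemma lam_rep: "\<forall>t\<in>U. lam k t = ev (lam_poly k) t / Dt t ^ lam_exp k"
proof (induction k rule: less_induct)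
  case (less k)
  show ?case
  proof (cases k)
    case 0
    then show ?thesis by (simp add: lam_exp_def)
  next
    case (Suc j)
    have rep: "lam i s = ev (lam_poly i) s / Dt s ^ lam_exp i" if "i \<le> j" "s \<in> U" for i s
      using less.IH[of i] Suc that by simp
    show ?thesis
    proof (cases "even j")
      case True
      have "lam i s = 0" if "i \<le> j" "odd i" "s \<in> U" for i s
        using rep[OF that(1,3)] lam_poly_odd[OF that(2)] by simp
      then show ?thesis
        using lam_vanish_step[OF True] lam_poly_odd[of "Suc j"] True Suc by simp
    next
      case False
      then obtain m where j: "j = 2 * m + 1" by (metis oddE)
      show ?thesis using lam_rep_step[OF rep[unfolded j]] Suc j by simp
    qed
  qed
qed

lemma lam_value: "t \<in> U \<Longrightarrow> lam k t = ev (lam_poly k) t / Dt t ^ lam_exp k"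
  using lam_rep by blast

lemma lam_odd: "t \<in> U \<Longrightarrow> odd k \<Longrightarrow> lam k t = 0"
  using lam_value[of t k] lam_poly_odd[of k] by simp

definition R_form :: "nat \<Rightarrow> complex \<Rightarrow> complex" where
  "R_form k t = (if even k then ev (R_poly k) t / Dt t ^ R_exp k
                 else lam 0 t * Rm1 t * ev (R_poly k) t / Dt t ^ R_exp k)"

lemma lam_square_rep:
  assumes t: "t \<in> U"
  shows "(\<Sum>l\<le>2 * n + 2. lam l t * lam (2 * n + 2 - l) t) = ev (lam_square (2 * n)) t / Dt t ^ (5 * n + 4)"
  unfolding lam_square_def eval2_sum sum_divide_distrib
proof (intro sum.cong refl)
  fix l assume l: "l \<in> {..2 * n + 2}"
  show "lam l t * lam (2 * n + 2 - l) t = ev (lam_poly l * lam_poly (2 * n + 2 - l)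
          * polyD ^ (R_exp (2 * n) + 2 - lam_exp l - lam_exp (2 * n + 2 - l))) t / Dt t ^ (5 * n + 4)"
  proof (cases "even l")
    case False
    then show ?thesis using lam_odd[OF t] lam_poly_odd by simp
  next
    case True
    then obtain a where a: "l = 2 * a" by (auto elim!: evenE)
    have "2 * n + 2 - l = 2 * (Suc n - a)" using a l by auto
    then have "lam_exp l + lam_exp (2 * n + 2 - l) \<le> 5 * n + 4"
      using a l by (simp add: lam_exp_even) linarith
    then have e: "lam_exp l + lam_exp (2 * n + 2 - l)
                  + (R_exp (2 * n) + 2 - lam_exp l - lam_exp (2 * n + 2 - l)) = 5 * n + 4"
      by (simp add: R_exp_even)
    have "lam l t * lam (2 * n + 2 - l) t = ev (lam_poly l) t / Dt t ^ lam_exp l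
            * (ev (lam_poly (2 * n + 2 - l)) t / Dt t ^ lam_exp (2 * n + 2 - l))"
      using lam_value[OF t, of l] lam_value[OF t, of "2 * n + 2 - l"] by simp
    also have "\<dots> = ev (lam_poly l) t * ev (lam_poly (2 * n + 2 - l)) t
                 * Dt t ^ (R_exp (2 * n) + 2 - lam_exp l - lam_exp (2 * n + 2 - l)) / Dt t ^ (5 * n + 4)"
      by (rule frac_mult2[OF D_nonzero[OF t] e])
    finally show ?thesis by simp
  qed
qed

lemma lam_square_vanish:
  assumes "t \<in> U" "odd j"
  shows "(\<Sum>l\<le>j + 2. lam l t * lam (j + 2 - l) t) = 0"
proof (intro sum.neutral ballI)
  fix l assume "l \<in> {..j + 2}"
  then have "odd l \<or> odd (j + 2 - l)" using assms(2) by auto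
  then show "lam l t * lam (j + 2 - l) t = 0"
    by (elim disjE) (simp_all add: lam_odd[OF assms(1)])
qed

lemma R_conv_rep_even:
  assumes IH: "\<And>i. i \<le> 2 * n \<Longrightarrow> R i t = R_form i t" and t: "t \<in> U"
  shows "(\<Sum>i\<le>2 * n. R i t * R (2 * n - i) t) = ev (R_conv_even (2 * n)) t / Dt t ^ (5 * n + 4)"
  unfolding R_conv_even_def eval2_sum sum_divide_distrib
proof (intro sum.cong refl)
  fix i assume i: "i \<in> {..2 * n}"
  show "R i t * R (2 * n - i) t = ev (if even i then R_poly i * R_poly (2 * n - i)
                                     else polyX * R_poly i * R_poly (2 * n - i)) t / Dt t ^ (5 * n + 4)"
  proof (cases "even i")
    case True
    then obtain a where a: "i = 2 * a" by (auto elim!: evenE)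
    have ji: "2 * n - i = 2 * (n - a)" using a by auto
    have r: "R_exp i + R_exp (2 * n - i) + 0 = 5 * n + 4" using a ji i by (simp add: R_exp_even)
    have "R i t * R (2 * n - i) t
          = ev (R_poly i) t / Dt t ^ R_exp i * (ev (R_poly (2 * n - i)) t / Dt t ^ R_exp (2 * n - i))"
      using IH[of i] IH[of "2 * n - i"] True ji i by (simp add: R_form_def)
    also have "\<dots> = ev (R_poly i) t * ev (R_poly (2 * n - i)) t * Dt t ^ 0 / Dt t ^ (5 * n + 4)"
      by (rule frac_mult2[OF D_nonzero[OF t] r])
    finally show ?thesis using True by simp
  next
    case False
    then obtain a where a: "i = 2 * a + 1" by (metis oddE)
    have ji: "2 * n - i = Suc (2 * (n - a - 1))" using a i by auto
    have r: "R_exp i + R_exp (2 * n - i) = Suc (5 * n + 4)"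
      using a ji i by (simp add: R_exp_odd)
    have "R i t * R (2 * n - i) t
          = lam 0 t * Rm1 t * ev (R_poly i) t / Dt t ^ R_exp i
            * (lam 0 t * Rm1 t * ev (R_poly (2 * n - i)) t / Dt t ^ R_exp (2 * n - i))"
      using IH[of i] IH[of "2 * n - i"] False ji i by (simp add: R_form_def)
    also have "\<dots> = lam 0 t * ev (R_poly i) t * ev (R_poly (2 * n - i)) t / Dt t ^ (5 * n + 4)"
      by (rule frac_mult_odd_odd[OF Rm1_square[OF t] D_eq[OF t] D_nonzero[OF t] r])
    finally show ?thesis using False by simp
  qed
qed

lemma R_conv_rep_odd:
  assumes IH: "\<And>i. i \<le> 2 * n + 1 \<Longrightarrow> R i t = R_form i t" and t: "t \<in> U"
  shows "(\<Sum>i\<le>2 * n + 1. R i t * R (2 * n + 1 - i) t)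
         = lam 0 t * Rm1 t * ev (R_conv_odd (2 * n + 1)) t / Dt t ^ (5 * n + 7)"
  unfolding R_conv_odd_def
proof (rule sum_eval2_frac)
  fix i assume i: "i \<in> {..2 * n + 1}"
  show "R i t * R (2 * n + 1 - i) t
        = lam 0 t * Rm1 t * ev (R_poly i * R_poly (2 * n + 1 - i)) t / Dt t ^ (5 * n + 7)"
  proof (cases "even i")
    case True
    then obtain a where a: "i = 2 * a" by (auto elim!: evenE)
    have ji: "2 * n + 1 - i = Suc (2 * (n - a))" using a i by auto
    have r: "R_exp i + R_exp (2 * n + 1 - i) = 5 * n + 7"
      using a ji i by (simp add: R_exp_even R_exp_odd)
    have "R i t * R (2 * n + 1 - i) t = ev (R_poly i) t / Dt t ^ R_exp i
            * (lam 0 t * Rm1 t * ev (R_poly (2 * n + 1 - i)) t / Dt t ^ R_exp (2 * n + 1 - i))"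
      using IH[of i] IH[of "2 * n + 1 - i"] True ji i by (simp add: R_form_def)
    also have "\<dots> = lam 0 t * Rm1 t * (ev (R_poly i) t * ev (R_poly (2 * n + 1 - i)) t) / Dt t ^ (5 * n + 7)"
      by (rule frac_mult_scaled(1)[OF r D_nonzero[OF t]])
    finally show ?thesis by simp
  next
    case False
    then obtain a where a: "i = Suc (2 * a)" by (metis oddE Suc_eq_plus1)
    have ji: "2 * n + 1 - i = 2 * (n - a)" using a i by auto
    have r: "R_exp i + R_exp (2 * n + 1 - i) = 5 * n + 7"
      using a ji i by (simp add: R_exp_even R_exp_odd)
    have "R i t * R (2 * n + 1 - i) t = lam 0 t * Rm1 t * ev (R_poly i) t / Dt t ^ R_exp i
            * (ev (R_poly (2 * n + 1 - i)) t / Dt t ^ R_exp (2 * n + 1 - i))"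
      using IH[of i] IH[of "2 * n + 1 - i"] False ji i by (simp add: R_form_def)
    also have "\<dots> = lam 0 t * Rm1 t * (ev (R_poly i) t * ev (R_poly (2 * n + 1 - i)) t) / Dt t ^ (5 * n + 7)"
      by (rule frac_mult_scaled(2)[OF r D_nonzero[OF t]])
    finally show ?thesis by simp
  qed
qed

(* Product rule for R_j = R_(-1) * (x P(x) / D^r), using R_(-1)' = -2 R_(-1) R_0. *)
lemma R_odd_deriv:
  assumes Rj: "\<forall>s\<in>U. R j s = lam 0 s * Rm1 s * ev P s / Dt s ^ r" and t: "t \<in> U"
  shows "deriv (R j) t = -2 * Rm1 t * (ev R0_poly t / Dt t ^ 2) * (ev (polyX * P) t / Dt t ^ r)
                         + ev (theta r (polyX * P)) t / Dt t ^ (r + 2) * Rm1 t"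
proof -
  define G where "G s = ev (polyX * P) s / Dt s ^ r" for s
  have "((\<lambda>s. Rm1 s * G s) has_field_derivative
          deriv Rm1 t * G t + ev (theta r (polyX * P)) t / Dt t ^ (r + 2) * Rm1 t) (at t)"
    unfolding G_def by (rule DERIV_mult[OF Rm1_has_deriv[OF t] frac_has_deriv[OF t]])
  then have "(R j has_field_derivative
          deriv Rm1 t * G t + ev (theta r (polyX * P)) t / Dt t ^ (r + 2) * Rm1 t) (at t)"
    by (rule has_field_derivative_transform_within_open[OF _ open_U t]) (use Rj in \<open>simp add: G_def\<close>)
  moreover have "deriv Rm1 t = -2 * Rm1 t * R 0 t"
    using R0_eq[OF t] by algebra
  ultimately show ?thesis
    using R0_value[OF t] by (simp add: DERIV_imp_deriv G_def)
qed

lemma R_odd_step: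
  assumes IH: "\<And>i s. i \<le> 2 * n \<Longrightarrow> s \<in> U \<Longrightarrow> R i s = R_form i s" and t: "t \<in> U"
  shows "R (2 * n + 1) t = R_form (2 * n + 1) t"
proof -
  let ?A = "ev (lam_square (2 * n)) t" and ?B = "ev (R_conv_even (2 * n)) t"
    and ?C = "ev (theta (R_exp (2 * n)) (R_poly (2 * n))) t"
  have "\<forall>s\<in>U. R (2 * n) s = ev (R_poly (2 * n)) s / Dt s ^ R_exp (2 * n)"
    using IH[of "2 * n"] by (simp add: R_form_def)
  moreover have "R_exp (2 * n) + 2 = 5 * n + 4"
    by (simp add: R_exp_even)
  ultimately have dR: "deriv (R (2 * n)) t = ?C / Dt t ^ (5 * n + 4)"
    using frac_deriv[OF _ t] by metis
  have conv: "(\<Sum>i\<le>2 * n. R i t * R (2 * n - i) t) = ?B / Dt t ^ (5 * n + 4)"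
    by (rule R_conv_rep_even[OF IH[OF _ t] t])
  have "2 * Rm1 t * R (Suc (2 * n)) t + ?B / Dt t ^ (5 * n + 4) + ?C / Dt t ^ (5 * n + 4)
        = 6 * (?A / Dt t ^ (5 * n + 4))"
    using R_Suc_eq[OF t, of "2 * n"] unfolding lam_square_rep[OF t] conv dR .
  then have "2 * Rm1 t * R (Suc (2 * n)) t = (6 * ?A - ?B - ?C) / Dt t ^ (5 * n + 4)"
    by (simp add: diff_divide_distrib eq_diff_eq ac_simps)
  from divide_by_2Rm1[OF this Rm1_square[OF t] D_eq[OF t] Rm1_nonzero[OF t] lam0_nonzero[OF t]
      Delta_nonzero[OF t]]
  show ?thesis
    using R_poly_Suc_even[of "2 * n"] by (simp add: R_form_def R_exp_def ac_simps)
qed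

lemma R_even_step:
  assumes IH: "\<And>i s. i \<le> 2 * n + 1 \<Longrightarrow> s \<in> U \<Longrightarrow> R i s = R_form i s" and t: "t \<in> U"
  shows "R (2 * n + 2) t = R_form (2 * n + 2) t"
proof -
  let ?j = "2 * n + 1"
  have Rj: "\<forall>s\<in>U. R ?j s = lam 0 s * Rm1 s * ev (R_poly ?j) s / Dt s ^ R_exp ?j"
    using IH[of ?j] by (simp add: R_form_def)
  have e: "R_exp ?j + 2 = 5 * n + 7"
    by (simp add: R_exp_def)
  note dR = R_odd_deriv[OF Rj t, unfolded e]
  have "odd ?j" by simp
  have conv: "(\<Sum>i\<le>?j. R i t * R (?j - i) t)
              = lam 0 t * Rm1 t * ev (R_conv_odd ?j) t / Dt t ^ (5 * n + 7)"
    by (rule R_conv_rep_odd[OF IH[OF _ t] t])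
  have "2 * Rm1 t * R (Suc ?j) t + lam 0 t * Rm1 t * ev (R_conv_odd ?j) t / Dt t ^ (5 * n + 7)
        + deriv (R ?j) t = 0"
    using R_Suc_eq[OF t, of ?j] unfolding conv lam_square_vanish[OF t \<open>odd ?j\<close>] by simp
  from solve_odd_index_eq[OF this dR e] have "R (Suc ?j) t = (-1/2) * (lam 0 t * ev (R_conv_odd ?j) t
      - 2 * (ev R0_poly t * ev (polyX * R_poly ?j) t) + ev (theta (R_exp ?j) (polyX * R_poly ?j)) t)
      / Dt t ^ (5 * n + 7)"
    using Rm1_nonzero[OF t] D_nonzero[OF t] by simp
  then show ?thesis
    using R_poly_Suc_odd[of ?j] by (simp add: R_form_def R_exp_def algebra_simps)
qed

lemma R_rep: "\<forall>t\<in>U. R k t = R_form k t"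
proof (induction k rule: less_induct)
  case (less k)
  show ?case
  proof (cases k)
    case 0
    have "R_form 0 t = ev R0_poly t / Dt t ^ 2" for t
      by (simp add: R_form_def R_exp_def power2_eq_square)
    then show ?thesis using R0_value unfolding 0 by metis
  next
    case (Suc j)
    have IH: "R i s = R_form i s" if "i \<le> j" "s \<in> U" for i s
      using less.IH[of i] Suc that by simp
    show ?thesis
    proof (cases "even j")
      case True
      then obtain n where "j = 2 * n" by (auto elim!: evenE)
      then show ?thesis using R_odd_step[of n] IH Suc by simp
    next
      case False
      then obtain n where "j = 2 * n + 1" by (metis oddE)
      then show ?thesis using R_even_step[of n] IH Suc by simp
    qed
  qed
qed

lemma R_representation:
  assumes "t \<in> U"
  shows "R (2 * n) t = ev (R_poly (2 * n)) t / Dt t ^ (5 * n + 2)"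
    and "R (2 * n + 1) t = lam 0 t * Rm1 t * ev (R_poly (2 * n + 1)) t / Dt t ^ (5 * n + 5)"
  using R_rep assms by (simp_all add: R_form_def R_exp_def)

end

theorem mainTheorem19:
  fixes n :: nat
  shows "\<exists>qe qo :: complex poly poly.
           degree qe \<le> 9 * n + 4 \<and> degree qo \<le> 9 * n + 8 \<and>
           (\<forall>(c::complex) (U::complex set) lam nu Rm1 R.
              open U \<longrightarrow> zero_param_sol c U lam nu \<longrightarrow> R_sol U lam Rm1 R \<longrightarrow>
              (\<forall>t\<in>U. lam 0 t \<noteq> 0 \<and> 6 * (lam 0 t)^2 + t \<noteq> 0) \<longrightarrow>
              (\<forall>t\<in>U.
                 R (2 * n) t = eval2 qe (lam 0 t) c / (4 * (lam 0 t)^3 - c) ^ (5 * n + 2) \<and>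
                 R (2 * n + 1) t = lam 0 t * Rm1 t * eval2 qo (lam 0 t) c
                                   / (4 * (lam 0 t)^3 - c) ^ (5 * n + 5)))"
proof (rule exI[of _ "R_poly (2 * n)"], rule exI[of _ "R_poly (2 * n + 1)"], intro conjI allI impI)
  show "degree (R_poly (2 * n)) \<le> 9 * n + 4" "degree (R_poly (2 * n + 1)) \<le> 9 * n + 8"
    using R_poly_degree[of "2 * n"] R_poly_degree[of "2 * n + 1"] by (simp_all add: R_deg_def)
next
  fix c U lam nu Rm1 R
  assume "open U" "zero_param_sol c U lam nu" "R_sol U lam Rm1 R"
    "\<forall>t\<in>U. lam 0 t \<noteq> 0 \<and> 6 * (lam 0 t)^2 + t \<noteq> 0"
  then interpret PII_solution c U lam nu Rm1 R
    by unfold_locales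
  show "\<forall>t\<in>U.
          R (2 * n) t = eval2 (R_poly (2 * n)) (lam 0 t) c / (4 * (lam 0 t)^3 - c) ^ (5 * n + 2) \<and>
          R (2 * n + 1) t = lam 0 t * Rm1 t * eval2 (R_poly (2 * n + 1)) (lam 0 t) c
                              / (4 * (lam 0 t)^3 - c) ^ (5 * n + 5)"
    using R_representation by blast
qed

end
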